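(* (Limited Loss Theorem.) Consider any instance of the repairman problem with unit-length time windows, and let $R^*$ be an optimal service run with respect to the untrimmed requests. Then there exists a service run $R$ with respect to the trimmed requests such that $\pi(R) \geq \frac{1}{3}\,\pi(R^* )$.
   Context: Repairman problem: we are given a weighted undirected graph (distances are shortest-path distances) and a set of service requests; each request has a location (a node; several requests may share a node) and a time window $[a,a+1)$ of unit length. A repairman moves in the graph at a fixed given speed, and may start at any location at any time and stop anywhere. He performs a service event for a request when he is at its location during its time window; each request served yields profit 1. A service run is a feasible sequence of service events; its profit $\pi(R)$ is the total profit of the requests it serves. Trimming: divide time at the integer multiples of $1/2$; a period is a time interval from one such division up to but not including the next. Assume no window starts at a division (and all window start times are positive). Each unit window then wholly contains exactly one period, and the trimmed request is the request whose time window is replaced by that period. A service run with respect to trimmed requests serves a request only when at its location during its trimmed window. *)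

theory Defs
  imports Complex_Main
begin

definition is_walk :: "('v \<times> 'v) set \<Rightarrow> 'v list \<Rightarrow> bool" where
  "is_walk E ps \<longleftrightarrow> ps \<noteq> [] \<and> (\<forall>e \<in> set (zip ps (tl ps)). e \<in> E)"

definition walk_length :: "('v \<Rightarrow> 'v \<Rightarrow> real) \<Rightarrow> 'v list \<Rightarrow> real" where
  "walk_length w ps = (\<Sum>(x, y) \<leftarrow> zip ps (tl ps). w x y)"

definition reach_within :: "('v \<times> 'v) set \<Rightarrow> ('v \<Rightarrow> 'v \<Rightarrow> real) \<Rightarrow> 'v \<Rightarrow> 'v \<Rightarrow> real \<Rightarrow> bool" where
  "reach_within E w u v c \<longleftrightarrow>
     (\<exists>ps. is_walk E ps \<and> hd ps = u \<and> last ps = v \<and> walk_length w ps \<le> c)"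

text \<open>A service run is a list of service events (request, time).\<close>
definition is_run ::
  "('v \<times> 'v) set \<Rightarrow> ('v \<Rightarrow> 'v \<Rightarrow> real) \<Rightarrow> real \<Rightarrow> 'r set \<Rightarrow> ('r \<Rightarrow> 'v)
   \<Rightarrow> ('r \<Rightarrow> real) \<Rightarrow> real \<Rightarrow> ('r \<times> real) list \<Rightarrow> bool" where
  "is_run E w s Q loc lo len R \<longleftrightarrow>
     (\<forall>(q, t) \<in> set R. q \<in> Q \<and> lo q \<le> t \<and> t < lo q + len) \<and>
     (\<forall>i. Suc i < length R \<longrightarrow>
        snd (R ! i) \<le> snd (R ! Suc i) \<and>
        reach_within E w (loc (fst (R ! i))) (loc (fst (R ! Suc i)))
                     (s * (snd (R ! Suc i) - snd (R ! i))))"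

text \<open>Profit: number of distinct requests served (profit 1 each).\<close>
definition profit :: "('r \<times> real) list \<Rightarrow> nat" where
  "profit R = card (fst ` set R)"

text \<open>Trimming: the unique period [k/2, (k+1)/2) wholly contained in [a, a+1),
  when 2a is not an integer; it starts at ceiling(2a)/2.\<close>
definition trim_start :: "real \<Rightarrow> real" where
  "trim_start a = real_of_int \<lceil>2 * a\<rceil> / 2"

end

theory Submission
  imports Defs
begin

text \<open>Every event of a run lies in one of three consecutive periods: the trimmed one, the one
  before it or the one after it, because its unit window meets at most these three.  Shifting
  all events of one class by the same multiple of 1/2 keeps the run feasible and moves every
  event into its trimmed window, and one of the three classes serves at least a third of the
  requests.\<close>

lemma walk_append:
  assumes "is_walk E ps" "is_walk E qs" "last ps = hd qs"
  shows "is_walk E (ps @ tl qs) \<and> walk_length w (ps @ tl qs) = walk_length w ps + walk_length w qs"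
  using assms
proof (induction ps rule: induct_list012)
  case 1
  then show ?case by (simp add: is_walk_def)
next
  case (2 x)
  then show ?case by (cases qs) (auto simp: is_walk_def walk_length_def)
next
  case (3 x y zs)
  have "is_walk E (y # zs)" "(x, y) \<in> E"
    using "3.prems"(1) by (auto simp: is_walk_def)
  with "3.IH"(2) "3.prems"(2,3) show ?case
    by (auto simp: is_walk_def walk_length_def)
qed

lemma reach_within_trans:
  assumes "reach_within E w u v c1" "reach_within E w v x c2"
  shows "reach_within E w u x (c1 + c2)"
proof -
  obtain ps where ps: "is_walk E ps" "hd ps = u" "last ps = v" "walk_length w ps \<le> c1"
    using assms(1) by (auto simp: reach_within_def)
  obtain qs where qs: "is_walk E qs" "hd qs = v" "last qs = x" "walk_length w qs \<le> c2"
    using assms(2) by (auto simp: reach_within_def)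
  have ne: "ps \<noteq> []" "qs \<noteq> []"
    using ps(1) qs(1) by (auto simp: is_walk_def)
  have "last (ps @ tl qs) = x"
    using ne ps(3) qs(2,3) by (cases qs) auto
  moreover have "hd (ps @ tl qs) = u"
    using ne ps(2) by simp
  ultimately show ?thesis
    using walk_append[OF ps(1) qs(1), of w] ps qs unfolding reach_within_def by force
qed

definition event_reachable ::
  "('v \<times> 'v) set \<Rightarrow> ('v \<Rightarrow> 'v \<Rightarrow> real) \<Rightarrow> real \<Rightarrow> ('r \<Rightarrow> 'v) \<Rightarrow> 'r \<times> real \<Rightarrow> 'r \<times> real \<Rightarrow> bool"
  where "event_reachable E w s loc x y \<longleftrightarrow>
    snd x \<le> snd y \<and> reach_within E w (loc (fst x)) (loc (fst y)) (s * (snd y - snd x))"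

lemma transp_event_reachable: "transp (event_reachable E w s loc)"
proof (rule transpI)
  fix x y z
  assume "event_reachable E w s loc x y" "event_reachable E w s loc y z"
  then have "snd x \<le> snd z" and
    "reach_within E w (loc (fst x)) (loc (fst z)) (s * (snd y - snd x) + s * (snd z - snd y))"
    unfolding event_reachable_def by (auto intro: reach_within_trans)
  then show "event_reachable E w s loc x z"
    unfolding event_reachable_def by (simp add: algebra_simps)
qed

lemma is_run_iff_successively:
  "is_run E w s Q loc lo len R \<longleftrightarrow>
     (\<forall>(q, t) \<in> set R. q \<in> Q \<and> lo q \<le> t \<and> t < lo q + len) \<and>
     successively (event_reachable E w s loc) R"
  unfolding is_run_def successively_conv_nth event_reachable_def by blast

lemma is_run_filter:
  assumes "is_run E w s Q loc lo len R"
  shows "is_run E w s Q loc lo len (filter P R)"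
proof -
  have "sorted_wrt (event_reachable E w s loc) R"
    using assms transp_event_reachable successively_conv_sorted_wrt
    unfolding is_run_iff_successively by blast
  then have "successively (event_reachable E w s loc) (filter P R)"
    by (simp add: sorted_wrt_filter successively_if_sorted_wrt)
  with assms show ?thesis
    unfolding is_run_iff_successively by auto
qed

lemma is_run_shift:
  assumes "is_run E w s Q loc lo len R"
  shows "is_run E w s Q loc (\<lambda>q. lo q - d) len (map (\<lambda>(q, t). (q, t - d)) R)"
proof -
  have "successively (event_reachable E w s loc) (map (\<lambda>(q, t). (q, t - d)) R)"
    using assms unfolding is_run_iff_successively successively_map
    by (auto elim!: successively_mono simp: event_reachable_def algebra_simps)
  with assms show ?thesis
    unfolding is_run_iff_successively by auto
qed

lemma is_run_rewindow:
  assumes "is_run E w s Q loc lo len R"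
    and "\<forall>(q, t) \<in> set R. lo' q \<le> t \<and> t < lo' q + len'"
  shows "is_run E w s Q loc lo' len' R"
  using assms unfolding is_run_iff_successively by auto

definition period_offset :: "real \<Rightarrow> real \<Rightarrow> int" where
  "period_offset a t = \<lfloor>2 * t\<rfloor> - \<lceil>2 * a\<rceil>"

lemma period_offset_range:
  assumes "a \<le> t" "t < a + 1"
  shows "period_offset a t \<in> {-1, 0, 1}"
proof -
  have "\<lceil>2 * a\<rceil> - 1 \<le> \<lfloor>2 * t\<rfloor>" "\<lfloor>2 * t\<rfloor> \<le> \<lceil>2 * a\<rceil> + 1"
    using assms by linarith+
  then show ?thesis
    unfolding period_offset_def by auto
qed

lemma shift_into_trimmed_window:
  "trim_start a \<le> t - period_offset a t / 2 \<and> t - period_offset a t / 2 < trim_start a + 1/2"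
proof -
  have "real_of_int \<lfloor>2 * t\<rfloor> \<le> 2 * t" "2 * t < real_of_int \<lfloor>2 * t\<rfloor> + 1"
    by linarith+
  then show ?thesis
    unfolding trim_start_def period_offset_def by (simp add: field_simps)
qed

lemma pigeonhole_classes:
  fixes c :: "'r \<times> 'b \<Rightarrow> 'j" and R :: "('r \<times> 'b) list"
  assumes "finite J" "J \<noteq> {}" "c ` set R \<subseteq> J"
  shows "\<exists>j \<in> J. card (fst ` set R) \<le> card J * card (fst ` set (filter (\<lambda>x. c x = j) R))"
proof (rule ccontr)
  let ?N = "card (fst ` set R)" and ?C = "\<lambda>j. card (fst ` set (filter (\<lambda>x. c x = j) R))"
  assume "\<not> ?thesis"
  then have less: "card J * ?C j < ?N" if "j \<in> J" for j
    using that by (simp add: not_le)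
  have "fst ` set R = (\<Union>j \<in> J. fst ` set (filter (\<lambda>x. c x = j) R))"
    using assms(3) by force
  then have "?N \<le> (\<Sum>j \<in> J. ?C j)"
    by (simp add: card_UN_le assms(1))
  then have "card J * ?N \<le> (\<Sum>j \<in> J. card J * ?C j)"
    by (simp add: sum_distrib_left[symmetric])
  also have "\<dots> < (\<Sum>j \<in> J. ?N)"
    using less assms(1,2) by (intro sum_strict_mono) auto
  finally show False
    by simp
qed

theorem theorem1:
  fixes E :: "('v \<times> 'v) set" and w :: "'v \<Rightarrow> 'v \<Rightarrow> real" and s :: real
    and Q :: "'r set" and loc :: "'r \<Rightarrow> 'v" and a :: "'r \<Rightarrow> real"
    and Ropt :: "('r \<times> real) list"
  assumes finE: "finite E"
    and symE: "\<And>u v. (u, v) \<in> E \<Longrightarrow> (v, u) \<in> E"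
    and symw: "\<And>u v. (u, v) \<in> E \<Longrightarrow> w u v = w v u"
    and posw: "\<And>u v. (u, v) \<in> E \<Longrightarrow> w u v > 0"
    and speed: "s > 0"
    and finQ: "finite Q"
    and startpos: "\<And>q. q \<in> Q \<Longrightarrow> a q > 0"
    and nodiv: "\<And>q. q \<in> Q \<Longrightarrow> 2 * a q \<notin> \<int>"
    and opt_run: "is_run E w s Q loc a 1 Ropt"
    and opt: "\<And>R. is_run E w s Q loc a 1 R \<Longrightarrow> profit R \<le> profit Ropt"
  shows "\<exists>R. is_run E w s Q loc (\<lambda>q. trim_start (a q)) (1/2) R
             \<and> real (profit R) \<ge> real (profit Ropt) / 3"
proof -
  define cls where "cls = (\<lambda>(q, t). period_offset (a q) t)"
  have "cls ` set Ropt \<subseteq> {-1, 0, 1}"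
    using opt_run period_offset_range by (fastforce simp: is_run_def cls_def)
  moreover have "card {-1, 0, 1 :: int} = 3"
    by simp
  ultimately obtain j where j: "profit Ropt \<le> 3 * card (fst ` set (filter (\<lambda>x. cls x = j) Ropt))"
    using pigeonhole_classes[of "{-1, 0, 1}" cls Ropt]
    unfolding profit_def by (metis empty_not_insert finite.emptyI finite.insertI)
  define R where "R = map (\<lambda>(q, t). (q, t - j / 2)) (filter (\<lambda>x. cls x = j) Ropt)"
  have "is_run E w s Q loc (\<lambda>q. a q - j / 2) 1 R"
    unfolding R_def by (intro is_run_shift is_run_filter opt_run)
  moreover have "\<forall>(q, t) \<in> set R. trim_start (a q) \<le> t \<and> t < trim_start (a q) + 1/2"
    using shift_into_trimmed_window by (auto simp: R_def cls_def)
  ultimately have "is_run E w s Q loc (\<lambda>q. trim_start (a q)) (1/2) R"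
    by (rule is_run_rewindow)
  moreover have "profit R = card (fst ` set (filter (\<lambda>x. cls x = j) Ropt))"
    unfolding R_def profit_def by (force intro!: arg_cong[where f = card])
  ultimately show ?thesis
    using j by (intro exI[of _ R]) auto
qed

end
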